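(* For any parameters $l_c>1$ and $r_c\in(0,1)$ let $(e^{2u(t)}(ds^2+d\theta^2))_{t\in[0,\infty)}$ be the corresponding cb-Ricci flow. Then \[ u(t,s) \ge -\log\cosh(s-s_b) + \tfrac12\log\bigl(2(1-t)\bigr) \] for all $(t,s)\in[0,1)\times\mathbb R$.
   Context: Setting (cb-surface): for a length $l_c>0$ and radius $r_c\in(0,1)$, the cb-surface is the rotationally symmetric plane $(\mathbb C,g_{\mathsf{cb}})$ with $g_{\mathsf{cb}}=e^{2u_{\mathsf{cb}}(s)}(ds^2+d\theta^2)$ in logarithmic cylindrical coordinates $z=e^{-s+s_e+i\theta}$, $(s,\theta)\in\mathbb R\times[0,2\pi)$, where $u_{\mathsf{cb}}(s)=-s+s_e$ for $s\le s_0$; $u_{\mathsf{cb}}(s)=-\log(r_c^{-1}\cos(r_cs+l_c))$ for $s\in(s_0,-l_c/r_c)$; $u_{\mathsf{cb}}(s)=\log r_c$ for $s\in[-l_c/r_c,0]$; $u_{\mathsf{cb}}(s)=-\log(r_c^{-1}\cos(r_cs))$ for $s\in(0,s_2]$; $u_{\mathsf{cb}}(s)=-\log\cosh(s-s_b)+\frac12\log2$ for $s>s_2$; with parameters $s_0\in(-(l_c+\pi/2)/r_c,-l_c/r_c)$, $s_e\in(s_0,-l_c/r_c)$, $s_2\in(0,\pi/(2r_c))$, $s_b>s_2$ chosen uniquely so that $u_{\mathsf{cb}}\in C^1(\mathbb R)$. The cb-Ricci flow is the Ricci flow $g(t)=e^{2u(t)}(ds^2+d\theta^2)$ on $\mathbb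 C$ with $g(0)=g_{\mathsf{cb}}$ which is instantaneously complete ($g(t)$ complete for $t>0$) and maximally stretched (for any Ricci flow $\tilde g(t)$ on $\mathbb C$, $t\in[0,\tilde T]$, with $\tilde g(0)\le g(0)$, one has $\tilde g(t)\le g(t)$), which exists and is unique for all time. *)

theory Defs
  imports "HOL-Analysis.Analysis"
begin

text \<open>Conformal factor of the cb-surface in logarithmic cylindrical coordinates:
  g_cb = exp(2 u_cb(s)) (ds^2 + d theta^2).\<close>
definition u_cb :: "real \<Rightarrow> real \<Rightarrow> real \<Rightarrow> real \<Rightarrow> real \<Rightarrow> real \<Rightarrow> real \<Rightarrow> real" where
  "u_cb lc rc s0 se s2 sb s =
     (if s \<le> s0 then - s + se
      else if s < - lc / rc then - ln (cos (rc * s + lc) / rc)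
      else if s \<le> 0 then ln rc
      else if s \<le> s2 then - ln (cos (rc * s) / rc)
      else - ln (cosh (s - sb)) + ln 2 / 2)"

text \<open>The same metric written as exp(2 w_cb(z)) |dz|^2 in the complex coordinate
  z = exp(-s + se + i theta); thus u = w + ln|z| = w + se - s.  At z = 0 the value is the
  (continuous) limit of the cap formula.\<close>
definition w_cb :: "real \<Rightarrow> real \<Rightarrow> real \<Rightarrow> real \<Rightarrow> real \<Rightarrow> real \<Rightarrow> complex \<Rightarrow> real" where
  "w_cb lc rc s0 se s2 sb z =
     (if z = 0 then 3 / 2 * ln 2 + sb - se
      else u_cb lc rc s0 se s2 sb (se - ln (cmod z)) - ln (cmod z))"

definition pdx :: "(complex \<Rightarrow> real) \<Rightarrow> complex \<Rightarrow> real" where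
  "pdx f z = deriv (\<lambda>\<xi>. f (Complex \<xi> (Im z))) (Re z)"

definition pdy :: "(complex \<Rightarrow> real) \<Rightarrow> complex \<Rightarrow> real" where
  "pdy f z = deriv (\<lambda>\<eta>. f (Complex (Re z) \<eta>)) (Im z)"

definition lap :: "(complex \<Rightarrow> real) \<Rightarrow> complex \<Rightarrow> real" where
  "lap f z = pdx (pdx f) z + pdy (pdy f) z"

definition ricci_flow_on :: "real set \<Rightarrow> (real \<Rightarrow> complex \<Rightarrow> real) \<Rightarrow> bool" where
  "ricci_flow_on I w \<longleftrightarrow>
     continuous_on (I \<times> UNIV) (\<lambda>p. w (fst p) (snd p)) \<and>
     continuous_on (I \<times> UNIV) (\<lambda>p. lap (w (fst p)) (snd p)) \<and>
     (\<forall>t\<in>I. \<forall>z.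
        (\<lambda>\<xi>. w t (Complex \<xi> (Im z))) differentiable (at (Re z)) \<and>
        (\<lambda>\<eta>. w t (Complex (Re z) \<eta>)) differentiable (at (Im z)) \<and>
        (\<lambda>\<xi>. pdx (w t) (Complex \<xi> (Im z))) differentiable (at (Re z)) \<and>
        (\<lambda>\<eta>. pdy (w t) (Complex (Re z) \<eta>)) differentiable (at (Im z)) \<and>
        ((\<lambda>\<tau>. w \<tau> z) has_real_derivative (exp (- 2 * w t z) * lap (w t) z)) (at t within I))"

definition complete_conformal :: "(complex \<Rightarrow> real) \<Rightarrow> bool" where
  "complete_conformal f \<longleftrightarrow>
     (\<forall>\<gamma> :: real \<Rightarrow> complex.
        \<gamma> C1_differentiable_on {0..<1} \<and> filterlim (\<lambda>\<tau>. cmod (\<gamma> \<tau>)) at_top (at_left 1) \<longrightarrow>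
        (\<integral>\<^sup>+ \<tau>. ennreal (exp (f (\<gamma> \<tau>)) * norm (vector_derivative \<gamma> (at \<tau>)))
              * indicator {0..<1} \<tau> \<partial>lborel) = \<infinity>)"

definition maximally_stretched :: "(real \<Rightarrow> complex \<Rightarrow> real) \<Rightarrow> bool" where
  "maximally_stretched w \<longleftrightarrow>
     (\<forall>T v. 0 < T \<and> ricci_flow_on {0..T} v \<and> (\<forall>z. v 0 z \<le> w 0 z) \<longrightarrow>
        (\<forall>t\<in>{0..T}. \<forall>z. v t z \<le> w t z))"

definition ic_ms_ricci_flow :: "(complex \<Rightarrow> real) \<Rightarrow> (real \<Rightarrow> complex \<Rightarrow> real) \<Rightarrow> bool" where
  "ic_ms_ricci_flow w0 w \<longleftrightarrow>
     ricci_flow_on {0<..} w \<and>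
     continuous_on ({0..} \<times> UNIV) (\<lambda>p. w (fst p) (snd p)) \<and>
     (\<forall>z. w 0 z = w0 z) \<and>
     (\<forall>t>0. complete_conformal (w t)) \<and>
     maximally_stretched w"

end

theory Submission
  imports Defs
begin

text \<open>The right-hand side is, in the coordinate z, the shrinking round sphere
  exp(2 v(t)) = 8 (1 - t) / (A + B |z|^2)^2 with A = exp(se - sb), A B = 1, which is an
  (incomplete) Ricci flow on the plane for t < 1.  At t = 0 it is the cigar profile
  -ln cosh(s - sb) + ln 2 / 2, which lies below u_cb: on the cigar end they agree, on the
  spherical cap the difference is decreasing and vanishes at the C^1 junction s2, and on the
  rest of the surface u_cb is at least ln rc, the value of the cap at s = 0.  Maximal
  stretchedness of the cb-Ricci flow then keeps the sphere below it for all t < 1.\<close>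

lemma isCont_eq_of_eventually_eq:
  fixes f g :: "'a::t2_space \<Rightarrow> 'b::t2_space"
  assumes "isCont f c" and "(g \<longlongrightarrow> g c) F" and "F \<le> at c" and "F \<noteq> bot"
    and "eventually (\<lambda>x. f x = g x) F"
  shows "f c = g c"
proof -
  have "(f \<longlongrightarrow> f c) F"
    using assms(1,3) by (simp add: isCont_def tendsto_mono)
  moreover have "(f \<longlongrightarrow> g c) F"
    using assms(2,5) by (simp add: tendsto_cong)
  ultimately show ?thesis
    using assms(4) tendsto_unique by blast
qed

subsection \<open>The initial metric lies above the cigar\<close>

definition cigar_profile :: "real \<Rightarrow> real \<Rightarrow> real" where
  "cigar_profile sb s = - ln (cosh (s - sb)) + ln 2 / 2"

definition cap_profile :: "real \<Rightarrow> real \<Rightarrow> real" where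
  "cap_profile rc s = - ln (cos (rc * s) / rc)"

lemma has_real_derivative_cigar_profile:
  "(cigar_profile sb has_real_derivative - tanh (x - sb)) (at x)"
  unfolding cigar_profile_def by (auto intro!: derivative_eq_intros simp: tanh_def)

lemma continuous_on_cigar_profile: "continuous_on S (cigar_profile sb)"
  unfolding cigar_profile_def
  by (intro continuous_intros) (auto intro: order.strict_trans1[OF _ cosh_real_pos])

lemma cigar_profile_mono:
  assumes "x \<le> y" and "y \<le> sb"
  shows "cigar_profile sb x \<le> cigar_profile sb y"
proof -
  have "cosh (y - sb) \<le> cosh (x - sb)"
    using assms by (subst cosh_real_nonpos_le_iff) auto
  thus ?thesis
    unfolding cigar_profile_def by (simp add: ln_le_cancel_iff)
qed

lemma has_real_derivative_cap_profile:
  assumes "0 < rc" and "\<bar>rc * x\<bar> < pi / 2"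
  shows "(cap_profile rc has_real_derivative rc * tan (rc * x)) (at x)"
proof -
  have "cos (rc * x) > 0"
    using assms by (intro cos_gt_zero_pi) auto
  thus ?thesis
    using assms unfolding cap_profile_def
    by (auto intro!: derivative_eq_intros simp: tan_def field_simps)
qed

lemma mult_less_pi_half:
  assumes "0 < rc" and "y \<le> s2" and "s2 < pi / (2 * rc)"
  shows "rc * y < pi / 2"
proof -
  have "rc * y \<le> rc * s2"
    using assms by simp
  moreover have "rc * s2 < pi / 2"
    using assms by (simp add: field_simps)
  ultimately show ?thesis
    by linarith
qed

lemma u_cb_eq_cigar_profile:
  assumes "0 < lc" and "0 < rc" and "s0 < - lc / rc" and "0 < s2" and "s2 < s"
  shows "u_cb lc rc s0 se s2 sb s = cigar_profile sb s"
proof -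
  have "- lc / rc < 0"
    using assms by simp
  hence "\<not> s \<le> s0" "\<not> s < - lc / rc" "\<not> s \<le> 0" "\<not> s \<le> s2"
    using assms by linarith+
  thus ?thesis
    unfolding u_cb_def cigar_profile_def by (simp only: if_False)
qed

lemma u_cb_eq_cap_profile:
  assumes "0 < lc" and "0 < rc" and "s0 < - lc / rc" and "0 < s" and "s \<le> s2"
  shows "u_cb lc rc s0 se s2 sb s = cap_profile rc s"
proof -
  have "- lc / rc < 0"
    using assms by simp
  hence "\<not> s \<le> s0" "\<not> s < - lc / rc" "\<not> s \<le> 0"
    using assms by linarith+
  thus ?thesis
    using assms unfolding u_cb_def cap_profile_def by (simp only: if_False if_True)
qed

lemma ln_le_u_cb_nonpos:
  assumes "0 < lc" and "0 < rc" and "rc < 1"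
    and "- (lc + pi / 2) / rc < s0" and "s0 < - lc / rc" and "s0 < se" and "s \<le> 0"
  shows "ln rc \<le> u_cb lc rc s0 se s2 sb s"
proof -
  have "ln rc < 0"
    using assms by simp
  consider "s \<le> s0" | "s0 < s" "s < - lc / rc" | "- lc / rc \<le> s"
    by linarith
  thus ?thesis
  proof cases
    case 1
    hence "u_cb lc rc s0 se s2 sb s = se - s"
      unfolding u_cb_def by simp
    thus ?thesis
      using 1 assms \<open>ln rc < 0\<close> by linarith
  next
    case 2
    have "- (lc + pi / 2) < rc * s0" and "rc * s0 < rc * s" and "rc * s < - lc"
      using assms 2 by (simp_all add: field_simps)
    hence "cos (rc * s + lc) > 0"
      by (intro cos_gt_zero_pi) auto
    moreover have "cos (rc * s + lc) \<le> 1"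
      by simp
    ultimately show ?thesis
      using 2 assms unfolding u_cb_def by (simp add: ln_div)
  next
    case 3
    hence "\<not> s \<le> s0" "\<not> s < - lc / rc"
      using assms by linarith+
    thus ?thesis
      using \<open>s \<le> 0\<close> unfolding u_cb_def by simp
  qed
qed

lemma u_cb_C1_junction:
  assumes "0 < lc" and "0 < rc" and "s0 < - lc / rc" and "0 < s2" and "s2 < pi / (2 * rc)"
    and C1: "u_cb lc rc s0 se s2 sb C1_differentiable_on UNIV"
  shows "cap_profile rc s2 = cigar_profile sb s2"
    and "rc * tan (rc * s2) = - tanh (s2 - sb)"
proof -
  define u where "u = u_cb lc rc s0 se s2 sb"
  obtain D where D: "\<And>x. (u has_real_derivative D x) (at x)" and "continuous_on UNIV D"
    using C1 unfolding C1_differentiable_on_def u_def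
    by (auto simp: has_real_derivative_iff_has_vector_derivative)
  hence D_cont: "isCont D s2"
    by (simp add: continuous_on_eq_continuous_at)
  have cigar: "u x = cigar_profile sb x" if "s2 < x" for x
    using u_cb_eq_cigar_profile[OF assms(1-4) that] by (simp add: u_def)
  have cap: "u x = cap_profile rc x" if "0 < x" "x \<le> s2" for x
    using u_cb_eq_cap_profile[OF assms(1-3) that] by (simp add: u_def)
  have "cos (rc * s2) > 0"
    using assms mult_less_pi_half[OF \<open>0 < rc\<close> order_refl assms(5)]
    by (intro cos_gt_zero_pi) (auto intro: order.strict_trans2[OF _ mult_nonneg_nonneg])

  have "u s2 = cigar_profile sb s2"
  proof (rule isCont_eq_of_eventually_eq[where f = u and g = "cigar_profile sb"])
    show "isCont u s2"
      by (rule DERIV_isCont[OF D])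
    show "(cigar_profile sb \<longlongrightarrow> cigar_profile sb s2) (at_right s2)"
      using continuous_on_cigar_profile[of UNIV sb]
      by (simp add: continuous_on_def filterlim_at_split)
    show "\<forall>\<^sub>F x in at_right s2. u x = cigar_profile sb x"
      using eventually_at_right_less[of s2] by eventually_elim (rule cigar)
  qed (auto simp: at_within_le_at)
  thus "cap_profile rc s2 = cigar_profile sb s2"
    using cap[of s2] assms by simp

  have "D s2 = - tanh (s2 - sb)"
  proof (rule isCont_eq_of_eventually_eq[where f = D and g = "\<lambda>x. - tanh (x - sb)"])
    show "((\<lambda>x. - tanh (x - sb)) \<longlongrightarrow> - tanh (s2 - sb)) (at_right s2)"
      by (intro tendsto_intros) auto
    show "\<forall>\<^sub>F x in at_right s2. D x = - tanh (x - sb)"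
      using eventually_at_right_less[of s2]
    proof eventually_elim
      case (elim x)
      have "(u has_real_derivative - tanh (x - sb)) (at x)"
        by (rule has_field_derivative_transform_within_open
            [OF has_real_derivative_cigar_profile, where S = "{s2<..}"]) (use elim cigar in auto)
      thus ?case
        using D DERIV_unique by blast
    qed
  qed (use D_cont in \<open>auto simp: at_within_le_at\<close>)
  moreover have "D s2 = rc * tan (rc * s2)"
  proof (rule isCont_eq_of_eventually_eq[where f = D and g = "\<lambda>x. rc * tan (rc * x)"])
    show "((\<lambda>x. rc * tan (rc * x)) \<longlongrightarrow> rc * tan (rc * s2)) (at_left s2)"
      using \<open>cos (rc * s2) > 0\<close> by (intro tendsto_intros) auto
    show "\<forall>\<^sub>F x in at_left s2. D x = rc * tan (rc * x)"
      using eventually_at_left_real[OF \<open>0 < s2\<close>]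
    proof eventually_elim
      case (elim x)
      have "\<bar>rc * x\<bar> < pi / 2"
        using elim assms mult_less_pi_half[of rc x s2] by simp
      hence "(u has_real_derivative rc * tan (rc * x)) (at x)"
        by (intro has_field_derivative_transform_within_open
            [OF has_real_derivative_cap_profile[OF \<open>0 < rc\<close>], where S = "{0<..<s2}"])
           (use elim cap in auto)
      thus ?case
        using D DERIV_unique by blast
    qed
  qed (use D_cont in \<open>auto simp: at_within_le_at\<close>)
  ultimately show "rc * tan (rc * s2) = - tanh (s2 - sb)"
    by simp
qed

text \<open>Both slopes rc tan(rc s) and -tanh(s - sb) of cap - cigar are increasing in s, so the
  slope is at most its value 0 at s2.\<close>

lemma cigar_profile_le_cap_profile:
  assumes "0 < rc" and "s2 < pi / (2 * rc)"
    and "cap_profile rc s2 = cigar_profile sb s2"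
    and "rc * tan (rc * s2) = - tanh (s2 - sb)"
    and "0 \<le> x" and "x \<le> s2"
  shows "cigar_profile sb x \<le> cap_profile rc x"
proof -
  define d where "d y = cap_profile rc y - cigar_profile sb y" for y
  have in_range: "\<bar>rc * y\<bar> < pi / 2" if "0 \<le> y" "y \<le> s2" for y
    using that assms mult_less_pi_half[OF \<open>0 < rc\<close> that(2) assms(2)]
      mult_nonneg_nonneg[of rc y] by simp
  have deriv_d: "(d has_real_derivative rc * tan (rc * y) + tanh (y - sb)) (at y)"
    if "0 \<le> y" "y \<le> s2" for y
    unfolding d_def[abs_def]
    using has_real_derivative_cap_profile[OF \<open>0 < rc\<close> in_range[OF that]]
      has_real_derivative_cigar_profile[of sb y]
    by (auto intro!: derivative_eq_intros)
  have "d s2 \<le> d x"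
  proof (rule DERIV_nonpos_imp_decreasing_open[OF \<open>x \<le> s2\<close>])
    fix y assume y: "x < y" "y < s2"
    have "0 < rc * y" and "rc * y < rc * s2" and "rc * s2 < pi / 2"
      using y assms in_range[of s2] by auto
    hence "- (pi / 2) < rc * y" and "rc * y < rc * s2" and "rc * s2 < pi / 2"
      using pi_gt_zero by linarith+
    hence "tan (rc * y) \<le> tan (rc * s2)"
      by (intro less_imp_le tan_monotone)
    hence "rc * tan (rc * y) \<le> rc * tan (rc * s2)"
      using \<open>0 < rc\<close> by simp
    moreover have "tanh (y - sb) \<le> tanh (s2 - sb)"
      using y by simp
    ultimately have "rc * tan (rc * y) + tanh (y - sb) \<le> 0"
      using assms(4) by linarith
    thus "\<exists>l. (d has_real_derivative l) (at y) \<and> l \<le> 0"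
      using deriv_d[of y] y assms by auto
  next
    show "continuous_on {x..s2} d"
      using \<open>0 \<le> x\<close>
      by (intro continuous_at_imp_continuous_on ballI DERIV_isCont[OF deriv_d]) auto
  qed
  thus ?thesis
    using assms(3) by (simp add: d_def)
qed

lemma cigar_profile_le_u_cb:
  assumes "0 < lc" and "0 < rc" and "rc < 1"
    and "- (lc + pi / 2) / rc < s0" and "s0 < - lc / rc" and "s0 < se"
    and "0 < s2" and "s2 < pi / (2 * rc)" and "s2 < sb"
    and "u_cb lc rc s0 se s2 sb C1_differentiable_on UNIV"
  shows "cigar_profile sb s \<le> u_cb lc rc s0 se s2 sb s"
proof -
  note junction = u_cb_C1_junction[OF assms(1,2,5,7,8,10)]
  consider "s \<le> 0" | "0 < s" "s \<le> s2" | "s2 < s"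
    by linarith
  thus ?thesis
  proof cases
    case 1
    have "cigar_profile sb s \<le> cigar_profile sb 0"
      using 1 assms by (intro cigar_profile_mono) auto
    also have "\<dots> \<le> cap_profile rc 0"
      using cigar_profile_le_cap_profile[OF assms(2,8) junction] assms by simp
    also have "\<dots> = ln rc"
      using assms by (simp add: cap_profile_def ln_div)
    also have "\<dots> \<le> u_cb lc rc s0 se s2 sb s"
      using ln_le_u_cb_nonpos[OF assms(1-6) 1] .
    finally show ?thesis .
  next
    case 2
    thus ?thesis
      using cigar_profile_le_cap_profile[OF assms(2,8) junction]
        u_cb_eq_cap_profile[OF assms(1,2,5) 2] by simp
  next
    case 3
    thus ?thesis
      using u_cb_eq_cigar_profile[OF assms(1,2,5,7) 3] by simp
  qed
qed

subsection \<open>The shrinking sphere\<close>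

definition shrinking_sphere :: "real \<Rightarrow> real \<Rightarrow> real \<Rightarrow> complex \<Rightarrow> real" where
  "shrinking_sphere A B t z = ln (2 * (1 - t)) / 2 + ln 2 - ln (A + B * ((Re z)\<^sup>2 + (Im z)\<^sup>2))"

lemma sphere_denominator_pos:
  "0 < A \<Longrightarrow> 0 < B \<Longrightarrow> 0 \<le> c \<Longrightarrow> 0 < A + B * ((x::real)\<^sup>2 + c)"
  by (intro add_pos_nonneg) auto

lemma has_real_derivative_sphere_slice:
  assumes "0 < A" and "0 < B" and "0 \<le> c"
  shows "((\<lambda>\<xi>. k - ln (A + B * (\<xi>\<^sup>2 + c))) has_real_derivative
           - (2 * B * x) / (A + B * (x\<^sup>2 + c))) (at x)"
  using sphere_denominator_pos[OF assms, of x]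
  by (auto intro!: derivative_eq_intros simp: field_simps)

lemma has_real_derivative_sphere_slope:
  assumes "0 < A" and "0 < B" and "0 \<le> c"
  shows "((\<lambda>\<xi>. - (2 * B * \<xi>) / (A + B * (\<xi>\<^sup>2 + c))) has_real_derivative
           - 2 * B * (A + B * (c - x\<^sup>2)) / (A + B * (x\<^sup>2 + c))\<^sup>2) (at x)"
proof -
  have nonzero: "A + B * (x\<^sup>2 + c) \<noteq> 0"
    using sphere_denominator_pos[OF assms, of x] by simp
  have num: "((\<lambda>\<xi>. - (2 * B * \<xi>)) has_real_derivative - (2 * B)) (at x)"
    and den: "((\<lambda>\<xi>. A + B * (\<xi>\<^sup>2 + c)) has_real_derivative B * (2 * x)) (at x)"
    by (auto intro!: derivative_eq_intros)
  have "- (2 * B) * (A + B * (x\<^sup>2 + c)) - B * (2 * x) * - (2 * B * x)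
      = - 2 * B * (A + B * (c - x\<^sup>2))"
    by (simp add: algebra_simps power2_eq_square)
  moreover have "(A + B * (x\<^sup>2 + c)) ^ Suc (Suc 0) = (A + B * (x\<^sup>2 + c))\<^sup>2"
    by (simp add: numeral_2_eq_2)
  ultimately show ?thesis
    using DERIV_quotient[OF num den nonzero] by simp
qed

lemma pdx_shrinking_sphere:
  "0 < A \<Longrightarrow> 0 < B \<Longrightarrow>
    pdx (shrinking_sphere A B t) z = - (2 * B * Re z) / (A + B * ((Re z)\<^sup>2 + (Im z)\<^sup>2))"
  unfolding pdx_def shrinking_sphere_def
  by (rule DERIV_imp_deriv) (use has_real_derivative_sphere_slice[of A B "(Im z)\<^sup>2"] in simp)

lemma pdy_shrinking_sphere:
  "0 < A \<Longrightarrow> 0 < B \<Longrightarrow>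
    pdy (shrinking_sphere A B t) z = - (2 * B * Im z) / (A + B * ((Re z)\<^sup>2 + (Im z)\<^sup>2))"
  unfolding pdy_def shrinking_sphere_def
  by (rule DERIV_imp_deriv)
     (use has_real_derivative_sphere_slice[of A B "(Re z)\<^sup>2"] in \<open>simp add: add.commute\<close>)

lemma lap_shrinking_sphere:
  assumes "0 < A" and "0 < B"
  shows "lap (shrinking_sphere A B t) z = - 4 * A * B / (A + B * ((Re z)\<^sup>2 + (Im z)\<^sup>2))\<^sup>2"
proof -
  have "pdx (pdx (shrinking_sphere A B t)) z
      = - 2 * B * (A + B * ((Im z)\<^sup>2 - (Re z)\<^sup>2)) / (A + B * ((Re z)\<^sup>2 + (Im z)\<^sup>2))\<^sup>2"
    unfolding pdx_def[of "pdx _"]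
    by (rule DERIV_imp_deriv)
       (use has_real_derivative_sphere_slope[OF assms, of "(Im z)\<^sup>2"] assms
        in \<open>simp add: pdx_shrinking_sphere\<close>)
  moreover have "pdy (pdy (shrinking_sphere A B t)) z
      = - 2 * B * (A + B * ((Re z)\<^sup>2 - (Im z)\<^sup>2)) / (A + B * ((Re z)\<^sup>2 + (Im z)\<^sup>2))\<^sup>2"
    unfolding pdy_def[of "pdy _"]
    by (rule DERIV_imp_deriv)
       (use has_real_derivative_sphere_slope[OF assms, of "(Re z)\<^sup>2"] assms
        in \<open>simp add: pdy_shrinking_sphere add.commute\<close>)
  ultimately show ?thesis
    unfolding lap_def by (simp add: add_divide_distrib[symmetric] algebra_simps)
qed

lemma exp_shrinking_sphere:
  assumes "0 < A" and "0 < B" and "t < 1"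
  shows "exp (- 2 * shrinking_sphere A B t z) = (A + B * ((Re z)\<^sup>2 + (Im z)\<^sup>2))\<^sup>2 / (8 * (1 - t))"
proof -
  define Q where "Q = A + B * ((Re z)\<^sup>2 + (Im z)\<^sup>2)"
  have "0 < Q"
    unfolding Q_def using sphere_denominator_pos[OF assms(1,2)] by simp
  have "- 2 * shrinking_sphere A B t z = ln (Q\<^sup>2) - ln (2 * (1 - t)) - ln 4"
    using \<open>0 < Q\<close> ln_realpow[of 2 2]
    by (simp add: shrinking_sphere_def Q_def ln_realpow algebra_simps)
  hence "exp (- 2 * shrinking_sphere A B t z) = Q\<^sup>2 / (2 * (1 - t)) / 4"
    using \<open>0 < Q\<close> assms by (simp add: exp_diff)
  thus ?thesis
    by (simp add: Q_def)
qed

lemma curvature_shrinking_sphere: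
  assumes "0 < A" and "0 < B" and "A * B = 1" and "t < 1"
  shows "- exp (- 2 * shrinking_sphere A B t z) * lap (shrinking_sphere A B t) z = 1 / (2 * (1 - t))"
proof -
  define Q where "Q = A + B * ((Re z)\<^sup>2 + (Im z)\<^sup>2)"
  have "0 < Q"
    unfolding Q_def using sphere_denominator_pos[OF assms(1,2)] by simp
  have "- exp (- 2 * shrinking_sphere A B t z) * lap (shrinking_sphere A B t) z
      = - (Q\<^sup>2 / (8 * (1 - t))) * (- 4 * A * B / Q\<^sup>2)"
    using exp_shrinking_sphere[OF assms(1,2,4)] lap_shrinking_sphere[OF assms(1,2)]
    by (simp add: Q_def)
  also have "\<dots> = 4 * (A * B) / (8 * (1 - t))"
    using \<open>0 < Q\<close> by (simp add: field_simps)
  also have "\<dots> = 1 / (2 * (1 - t))"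
    using assms(3,4) by (simp add: field_simps)
  finally show ?thesis .
qed

lemma ricci_flow_on_shrinking_sphere:
  assumes "0 < A" and "0 < B" and "A * B = 1" and "T < 1"
  shows "ricci_flow_on {0..T} (shrinking_sphere A B)"
  unfolding ricci_flow_on_def
proof (intro conjI ballI allI)
  have "A + B * ((Re z)\<^sup>2 + (Im z)\<^sup>2) \<noteq> 0" for z
    using sphere_denominator_pos[OF assms(1,2)] by (metis less_irrefl zero_le_power2)
  note denom_nonzero = this
  show "continuous_on ({0..T} \<times> UNIV) (\<lambda>p. shrinking_sphere A B (fst p) (snd p))"
    unfolding shrinking_sphere_def using assms denom_nonzero
    by (intro continuous_intros) auto
  show "continuous_on ({0..T} \<times> UNIV) (\<lambda>p. lap (shrinking_sphere A B (fst p)) (snd p))"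
    unfolding lap_shrinking_sphere[OF assms(1,2)] using denom_nonzero
    by (intro continuous_intros) auto
next
  fix t z assume t: "t \<in> {0..T}"
  show "(\<lambda>\<xi>. shrinking_sphere A B t (Complex \<xi> (Im z))) differentiable at (Re z)"
    unfolding real_differentiable_def shrinking_sphere_def
    using has_real_derivative_sphere_slice[OF assms(1,2), of "(Im z)\<^sup>2"] by auto
  show "(\<lambda>\<eta>. shrinking_sphere A B t (Complex (Re z) \<eta>)) differentiable at (Im z)"
    unfolding real_differentiable_def shrinking_sphere_def
    using has_real_derivative_sphere_slice[OF assms(1,2), of "(Re z)\<^sup>2"]
    by (auto simp: add.commute)
  show "(\<lambda>\<xi>. pdx (shrinking_sphere A B t) (Complex \<xi> (Im z))) differentiable at (Re z)"
    unfolding real_differentiable_def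
    using has_real_derivative_sphere_slope[OF assms(1,2), of "(Im z)\<^sup>2"] assms
    by (auto simp: pdx_shrinking_sphere)
  show "(\<lambda>\<eta>. pdy (shrinking_sphere A B t) (Complex (Re z) \<eta>)) differentiable at (Im z)"
    unfolding real_differentiable_def
    using has_real_derivative_sphere_slope[OF assms(1,2), of "(Re z)\<^sup>2"] assms
    by (auto simp: pdy_shrinking_sphere add.commute)
  have "t < 1"
    using t assms by auto
  have "((\<lambda>\<tau>. shrinking_sphere A B \<tau> z) has_real_derivative - 1 / (2 * (1 - t))) (at t)"
    unfolding shrinking_sphere_def using \<open>t < 1\<close>
    by (auto intro!: derivative_eq_intros simp: field_simps)
  moreover have "- 1 / (2 * (1 - t)) = exp (- 2 * shrinking_sphere A B t z) * lap (shrinking_sphere A B t) z"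
    using curvature_shrinking_sphere[OF assms(1-3) \<open>t < 1\<close>, of z] by linarith
  ultimately show "((\<lambda>\<tau>. shrinking_sphere A B \<tau> z) has_real_derivative
      exp (- 2 * shrinking_sphere A B t z) * lap (shrinking_sphere A B t) z) (at t within {0..T})"
    by (simp add: has_field_derivative_at_within)
qed

lemma shrinking_sphere_radial:
  assumes "cmod z = exp (se - s)"
  shows "shrinking_sphere (exp (se - sb)) (exp (sb - se)) t z + (se - s)
           = - ln (cosh (s - sb)) + ln (2 * (1 - t)) / 2"
proof -
  have "(Re z)\<^sup>2 + (Im z)\<^sup>2 = (exp (se - s))\<^sup>2"
    using assms cmod_power2[of z] by simp
  moreover have "exp (se - sb) + exp (sb - se) * (exp (se - s))\<^sup>2 = exp (se - s) * (2 * cosh (s - sb))"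
    by (simp add: cosh_field_def power2_eq_square algebra_simps flip: exp_add)
  ultimately show ?thesis
    unfolding shrinking_sphere_def by (simp add: ln_mult)
qed

lemma shrinking_sphere_le_w_cb:
  assumes "0 < lc" and "0 < rc" and "rc < 1"
    and "- (lc + pi / 2) / rc < s0" and "s0 < - lc / rc" and "s0 < se"
    and "0 < s2" and "s2 < pi / (2 * rc)" and "s2 < sb"
    and "u_cb lc rc s0 se s2 sb C1_differentiable_on UNIV"
  shows "shrinking_sphere (exp (se - sb)) (exp (sb - se)) 0 z \<le> w_cb lc rc s0 se s2 sb z"
proof (cases "z = 0")
  case True
  thus ?thesis
    by (simp add: w_cb_def shrinking_sphere_def)
next
  case False
  define s where "s = se - ln (cmod z)"
  have "cmod z = exp (se - s)"
    using False by (simp add: s_def)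
  hence "shrinking_sphere (exp (se - sb)) (exp (sb - se)) 0 z + (se - s) = cigar_profile sb s"
    by (simp add: shrinking_sphere_radial cigar_profile_def)
  also have "\<dots> \<le> u_cb lc rc s0 se s2 sb s"
    by (rule cigar_profile_le_u_cb[OF assms])
  finally show ?thesis
    using False by (simp add: w_cb_def s_def)
qed

theorem lemma5p1:
  fixes lc rc s0 se s2 sb :: real and w :: "real \<Rightarrow> complex \<Rightarrow> real"
  assumes "lc > 1" and "0 < rc" and "rc < 1"
    and "- (lc + pi / 2) / rc < s0" and "s0 < - lc / rc"
    and "s0 < se" and "se < - lc / rc"
    and "0 < s2" and "s2 < pi / (2 * rc)"
    and "s2 < sb"
    and "u_cb lc rc s0 se s2 sb C1_differentiable_on UNIV"
    and "ic_ms_ricci_flow (w_cb lc rc s0 se s2 sb) w"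
  shows "\<forall>t\<in>{0..<1}. \<forall>s \<theta>.
           w t (exp (Complex (se - s) \<theta>)) + (se - s) \<ge> - ln (cosh (s - sb)) + ln (2 * (1 - t)) / 2"
proof (intro ballI allI)
  fix t s \<theta> :: real assume t: "t \<in> {0..<1}"
  define v where "v = shrinking_sphere (exp (se - sb)) (exp (sb - se))"
  define z where "z = exp (Complex (se - s) \<theta>)"
  have flow: "ricci_flow_on {0..(1 + t) / 2} v"
    unfolding v_def using t
    by (intro ricci_flow_on_shrinking_sphere) (auto simp flip: exp_add)
  have ms: "maximally_stretched w" and w0: "\<forall>z. w 0 z = w_cb lc rc s0 se s2 sb z"
    using assms(12) by (simp_all add: ic_ms_ricci_flow_def)
  have "\<forall>z. v 0 z \<le> w 0 z"
    using w0 shrinking_sphere_le_w_cb[OF _ assms(2-6,8-11)] assms(1) by (simp add: v_def)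
  moreover have "0 < (1 + t) / 2" and "t \<in> {0..(1 + t) / 2}"
    using t by auto
  ultimately have "v t z \<le> w t z"
    using ms flow unfolding maximally_stretched_def by blast
  moreover have "v t z + (se - s) = - ln (cosh (s - sb)) + ln (2 * (1 - t)) / 2"
    unfolding v_def z_def by (rule shrinking_sphere_radial) simp
  ultimately show "w t (exp (Complex (se - s) \<theta>)) + (se - s) \<ge> - ln (cosh (s - sb)) + ln (2 * (1 - t)) / 2"
    unfolding z_def by linarith
qed

end
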